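(* Let $2<\alpha<3$, $0<\varepsilon\le\frac12$, and let $\gamma\in C^\infty(\mathbb R/\mathbb Z,\mathbb R^n)$ be a simple closed curve parametrized by arc length. There is an analytic function $G_2^\alpha:(\mathbb R^n\setminus\{0,1\})\times\mathbb R^{4n}\to\mathbb R^n$ (independent of $\gamma$ and $\varepsilon$), such that for all $x\in\mathbb R/\mathbb Z$, $$(P^\perp_{\dot\gamma}R_2^{\alpha,\varepsilon}\gamma)(x)=\int_{|w|\in[\varepsilon,\frac12]}\iiiint_{[0,1]^4}(s_1-s_2)^2\,G_2^\alpha\Big(\int_0^1\dot\gamma(x+tw)\,\mathrm dt,\ \dot\gamma(x),\ \ddot\gamma(x+s_2w+(s_1-s_2)\phi_1w),\ \ddot\gamma(x+s_2w+(s_1-s_2)\phi_2w),\ \ddot\gamma(x)\Big)\,\mathrm d\phi_1\,\mathrm d\phi_2\,\mathrm ds_1\,\mathrm ds_2\,\frac{\mathrm dw}{|w|^{\alpha-2}}.$$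
   Context: $(R_2^{\alpha,\varepsilon}\gamma)(x)=\int_{|w|\in[\varepsilon,\frac12]}\ddot\gamma(x)\Big(\frac{1}{|\gamma(x+w)-\gamma(x)|^\alpha}-\frac{1}{|w|^\alpha}\Big)\mathrm dw$. For $v\in\mathbb R^n$, $P^\perp_{\dot\gamma(x)}v=v-\langle v,\dot\gamma(x)\rangle\dot\gamma(x)$ and $(P^\perp_{\dot\gamma}u)(x)=P^\perp_{\dot\gamma(x)}u(x)$. Here "$\mathbb R^n\setminus\{0,1\}$" means the first argument $a$ avoids $|a|\in\{0,1\}$ (the function involves $g(a)=\frac{1}{2|a|^\alpha}\frac{1-|a|^\alpha}{1-|a|^2}$). *)

theory Defs
  imports "HOL-Analysis.Analysis"
begin

definition smooth_fun :: "(real \<Rightarrow> 'a::real_normed_vector) \<Rightarrow> bool" where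
  "smooth_fun g \<longleftrightarrow> (\<exists>D :: nat \<Rightarrow> real \<Rightarrow> 'a. D 0 = g \<and>
      (\<forall>k t. (D k has_vector_derivative D (Suc k) t) (at t)))"

definition dot :: "(real \<Rightarrow> 'a::real_normed_vector) \<Rightarrow> real \<Rightarrow> 'a" where
  "dot g x = vector_derivative g (at x)"

definition ddot :: "(real \<Rightarrow> 'a::real_normed_vector) \<Rightarrow> real \<Rightarrow> 'a" where
  "ddot g x = vector_derivative (dot g) (at x)"

text \<open>A smooth simple closed curve \<gamma> : R/Z \<rightarrow> R^n parametrized by arc length,
  represented as a 1-periodic map on R, injective on [0,1).\<close>
definition arclength_simple_closed_curve :: "(real \<Rightarrow> real^'n) \<Rightarrow> bool" where
  "arclength_simple_closed_curve g \<longleftrightarrow>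
     smooth_fun g \<and> (\<forall>x. g (x + 1) = g x) \<and> inj_on g {0..<1} \<and>
     (\<forall>x. norm (dot g x) = 1)"

definition R2 :: "real \<Rightarrow> real \<Rightarrow> (real \<Rightarrow> real^'n) \<Rightarrow> real \<Rightarrow> real^'n" where
  "R2 \<alpha> \<epsilon> g x = integral {w. \<epsilon> \<le> \<bar>w\<bar> \<and> \<bar>w\<bar> \<le> 1/2}
     (\<lambda>w. (1 / norm (g (x + w) - g x) powr \<alpha> - 1 / \<bar>w\<bar> powr \<alpha>) *\<^sub>R ddot g x)"

definition Pperp :: "'a::real_inner \<Rightarrow> 'a \<Rightarrow> 'a" where
  "Pperp v u = u - (inner u v) *\<^sub>R v"

text \<open>Real analyticity of a real-valued function on a Euclidean space: locally the sum of an
  (absolutely) convergent power series in the coordinates w.r.t. the standard basis.\<close>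
definition real_analytic_on_real :: "('a::euclidean_space \<Rightarrow> real) \<Rightarrow> 'a set \<Rightarrow> bool" where
  "real_analytic_on_real f S \<longleftrightarrow>
     (\<forall>a\<in>S. \<exists>r>0. \<exists>c :: ('a \<Rightarrow> nat) \<Rightarrow> real. \<forall>y\<in>ball a r.
        ((\<lambda>k. c k * (\<Prod>b\<in>Basis. ((y - a) \<bullet> b) ^ k b)) has_sum f y)
          {k. \<forall>b. b \<notin> Basis \<longrightarrow> k b = 0})"

definition real_analytic_on :: "('a::euclidean_space \<Rightarrow> 'b::euclidean_space) \<Rightarrow> 'a set \<Rightarrow> bool" where
  "real_analytic_on f S \<longleftrightarrow> open S \<and> (\<forall>b\<in>Basis. real_analytic_on_real (\<lambda>z. f z \<bullet> b) S)"

end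

theory Submission
  imports Defs "HOL-Complex_Analysis.Cauchy_Integral_Formula" "HOL-Library.Periodic_Fun"
begin

text \<open>Take \<open>G(a, b, c, d, e) = g(a) \<langle>c, d\<rangle> e\<close> with \<open>g(a) = h(|a|^2)\<close>, where
  \<open>h(t) = (1 - t^(\<alpha>/2)) / (2 t^(\<alpha>/2) (1 - t))\<close> is holomorphic near every \<open>t > 0\<close>, \<open>t \<noteq> 1\<close>;
  composing its power series with the polynomial \<open>|a|^2\<close> shows that \<open>G\<close> is analytic.
  Since \<open>|\<gamma>'| = 1\<close>, \<open>\<gamma>''(x) \<perp> \<gamma>'(x)\<close> and the projection acts trivially. For fixed \<open>w\<close> the
  \<open>\<phi>\<close>-integrals give \<open>(s1 - s2)^2 |C|^2\<close>, where \<open>(s1 - s2) w C = \<gamma>'(x + s1 w) - \<gamma>'(x + s2 w)\<close>;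
  as \<open>\<gamma>'\<close> is a unit vector this is \<open>(2 - 2 \<langle>\<gamma>'(x + s1 w), \<gamma>'(x + s2 w)\<rangle>) / w^2\<close>, and the
  \<open>s\<close>-integrals turn it into \<open>2 (1 - |a|^2) / w^2\<close> for the mean velocity \<open>a\<close> of \<open>\<gamma>\<close> on
  \<open>[x, x + w]\<close>. Finally \<open>w a = \<gamma>(x + w) - \<gamma>(x)\<close>, and the factor \<open>g(a) / |w|^(\<alpha>-2)\<close> turns
  \<open>2 (1 - |a|^2) / w^2\<close> into \<open>|\<gamma>(x + w) - \<gamma>(x)|^(-\<alpha>) - |w|^(-\<alpha>)\<close>.\<close>

lemma real_power_series_of_holomorphic:
  fixes H :: "complex \<Rightarrow> complex" and f :: "real \<Rightarrow> real"
  assumes R: "R > 0" and hol: "H holomorphic_on ball (of_real s0) R"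
    and real: "\<And>t. \<bar>t - s0\<bar> < R \<Longrightarrow> H (of_real t) = of_real (f t)"
  shows "\<exists>\<rho>>0. \<exists>c::nat\<Rightarrow>real. \<forall>t. \<bar>t - s0\<bar> < \<rho> \<longrightarrow>
     summable (\<lambda>m. \<bar>c m\<bar> * \<bar>t - s0\<bar>^m) \<and> (\<lambda>m. c m * (t - s0)^m) sums f t"
proof -
  define ck where "ck n = (deriv ^^ n) H (of_real s0) / fact n" for n
  have ser: "(\<lambda>n. ck n * (z - of_real s0)^n) sums H z" if "z \<in> ball (of_real s0) R" for z
    using holomorphic_power_series[OF hol that] by (simp add: ck_def)
  have in_ball: "of_real t \<in> ball (complex_of_real s0) R" if "\<bar>t - s0\<bar> < R" for t
    using that by (simp add: dist_norm flip: of_real_diff)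
  show ?thesis
  proof (intro exI[of _ "R/2"] conjI exI[of _ "\<lambda>n. Re (ck n)"] allI impI)
    show "R/2 > 0" using R by simp
    fix t assume t: "\<bar>t - s0\<bar> < R/2"
    have "of_real (s0 + 3*R/4) \<in> ball (complex_of_real s0) R"
      using R in_ball[of "s0 + 3*R/4"] by simp
    from sums_summable[OF ser[OF this]]
    have "summable (\<lambda>n. ck n * (complex_of_real (3*R/4))^n)" by simp
    moreover have "norm (complex_of_real (t - s0)) < norm (complex_of_real (3*R/4))"
      unfolding norm_of_real using t R by simp
    ultimately have "summable (\<lambda>n. norm (ck n * (complex_of_real (t - s0))^n))"
      by (rule powser_insidea)
    then show "summable (\<lambda>m. \<bar>Re (ck m)\<bar> * \<bar>t - s0\<bar>^m)"
      by (rule summable_comparison_test')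
         (simp add: norm_mult norm_power mult_right_mono abs_Re_le_cmod del: of_real_diff)
    have "\<bar>t - s0\<bar> < R" using t R by simp
    from sums_Re[OF ser[OF in_ball[OF this]]] real[OF this]
    show "(\<lambda>m. Re (ck m) * (t - s0)^m) sums f t"
      by (simp flip: of_real_diff of_real_power)
  qed
qed

definition g_radial :: "real \<Rightarrow> real \<Rightarrow> real" where
  "g_radial \<beta> t = (1 - t powr \<beta>) / (2 * t powr \<beta> * (1 - t))"

lemma g_radial_power_series:
  assumes "t0 > 0" "t0 \<noteq> 1"
  shows "\<exists>\<rho>>0. \<exists>c::nat\<Rightarrow>real. \<forall>t. \<bar>t - t0\<bar> < \<rho> \<longrightarrow>
     summable (\<lambda>m. \<bar>c m\<bar> * \<bar>t - t0\<bar>^m) \<and> (\<lambda>m. c m * (t - t0)^m) sums g_radial \<beta> t"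
proof -
  define R where "R = min t0 \<bar>1 - t0\<bar>"
  have R: "R > 0" using assms by (auto simp: R_def)
  have in_halfplane: "Re z > 0 \<and> z \<noteq> 1" if "z \<in> ball (of_real t0) R" for z
  proof -
    have d: "cmod (z - of_real t0) < R" using that by (simp add: dist_norm norm_minus_commute)
    have "\<bar>Re z - t0\<bar> \<le> cmod (z - of_real t0)" using abs_Re_le_cmod[of "z - of_real t0"] by simp
    then have "Re z > 0" using d by (auto simp: R_def)
    moreover have "z \<noteq> 1"
    proof
      assume "z = 1"
      then have "cmod (1 - of_real t0) < R" using d by simp
      then have "\<bar>1 - t0\<bar> < R" by (metis norm_of_real of_real_1 of_real_diff)
      then show False by (simp add: R_def)
    qed
    ultimately show ?thesis by simp
  qed
  have "(\<lambda>z. (1 - z powr of_real \<beta>) / (2 * z powr of_real \<beta> * (1 - z))) holomorphic_on ball (of_real t0) R"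
    apply (intro holomorphic_intros)
    subgoal for z using in_halfplane[of z] by (auto simp: complex_nonpos_Reals_iff powr_def)
    subgoal for z using in_halfplane[of z] by (auto simp: complex_nonpos_Reals_iff powr_def)
    subgoal for z using in_halfplane[of z] by (auto simp: complex_nonpos_Reals_iff powr_def)
    done
  moreover have "(1 - of_real t powr of_real \<beta>) / (2 * of_real t powr of_real \<beta> * (1 - of_real t)) =
      complex_of_real (g_radial \<beta> t)" if "\<bar>t - t0\<bar> < R" for t
  proof -
    have "t > 0" using that by (auto simp: R_def)
    then show ?thesis by (simp add: g_radial_def powr_of_real)
  qed
  ultimately show ?thesis by (rule real_power_series_of_holomorphic[OF R])
qed

definition monomial :: "'a::euclidean_space list \<Rightarrow> 'a \<Rightarrow> real" where
  "monomial bs u = prod_list (map (\<lambda>b. u \<bullet> b) bs)"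

lemma monomial_Nil [simp]: "monomial [] u = 1"
  and monomial_Cons [simp]: "monomial (b # bs) u = (u \<bullet> b) * monomial bs u"
  and monomial_append [simp]: "monomial (bs @ cs) u = monomial bs u * monomial cs u"
  by (simp_all add: monomial_def)

lemma monomial_concat: "monomial (concat (map f [0..<m])) u = (\<Prod>k<m. monomial (f k) u)"
  by (induction m) (auto simp: lessThan_Suc mult.commute)

lemma monomial_eq_prod_Basis:
  "set bs \<subseteq> Basis \<Longrightarrow> monomial bs u = (\<Prod>b\<in>Basis. (u \<bullet> b) ^ count (mset bs) b)"
proof (induction bs)
  case (Cons x bs)
  then have x: "x \<in> Basis" by simp
  have "(\<Prod>b\<in>Basis. (u \<bullet> b) ^ count (mset (x # bs)) b)
      = (\<Prod>b\<in>Basis. (if b = x then u \<bullet> b else 1) * (u \<bullet> b) ^ count (mset bs) b)"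
    by (intro prod.cong) auto
  also have "\<dots> = (\<Prod>b\<in>Basis. (if b = x then u \<bullet> b else 1)) * (\<Prod>b\<in>Basis. (u \<bullet> b) ^ count (mset bs) b)"
    by (rule prod.distrib)
  also have "(\<Prod>b\<in>Basis. (if b = x then u \<bullet> b else 1)) = u \<bullet> x"
    using x by (simp add: prod.delta)
  finally show ?case using Cons by simp
qed simp

lemma abs_monomial_le: "set bs \<subseteq> Basis \<Longrightarrow> \<bar>monomial bs u\<bar> \<le> norm u ^ length bs"
proof (induction bs)
  case (Cons b bs)
  then have "\<bar>u \<bullet> b\<bar> * \<bar>monomial bs u\<bar> \<le> norm u * norm u ^ length bs"
    by (intro mult_mono Basis_le_norm) auto
  then show ?case by (simp add: abs_mult)
qed simp

text \<open>Unlike power series indexed by exponent vectors, these expansions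
  are closed under sums, products and composition without any regrouping.\<close>
definition has_monomial_expansion ::
    "'i set \<Rightarrow> ('i \<Rightarrow> real) \<Rightarrow> ('i \<Rightarrow> 'a::euclidean_space list) \<Rightarrow> ('a \<Rightarrow> real) \<Rightarrow> 'a \<Rightarrow> real \<Rightarrow> bool" where
  "has_monomial_expansion I c v f z0 r \<longleftrightarrow> (\<forall>i\<in>I. set (v i) \<subseteq> Basis) \<and>
     (\<forall>u. norm u < r \<longrightarrow> (\<lambda>i. norm (c i * monomial (v i) u)) summable_on I \<and>
        ((\<lambda>i. c i * monomial (v i) u) has_sum f (z0 + u)) I)"

lemma has_monomial_expansion_cong:
  assumes "has_monomial_expansion I c v f z0 r" and "\<And>z. f z = g z"
  shows "has_monomial_expansion I c v g z0 r"
proof -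
  have "f = g" using assms(2) by blast
  with assms(1) show ?thesis by simp
qed

lemma has_monomial_expansion_imp_power_series:
  fixes z0 :: "'a::euclidean_space"
  assumes F: "has_monomial_expansion I c v f z0 r"
  shows "\<exists>c'. \<forall>y\<in>ball z0 r. ((\<lambda>k. c' k * (\<Prod>b\<in>Basis. ((y - z0) \<bullet> b) ^ k b)) has_sum f y)
            {k. \<forall>b. b \<notin> Basis \<longrightarrow> k b = 0}"
proof -
  define key where "key i = count (mset (v i))" for i
  define K where "K = {k::'a\<Rightarrow>nat. \<forall>b. b \<notin> Basis \<longrightarrow> k b = 0}"
  define fibre where "fibre k = {i\<in>I. key i = k}" for k
  define c' where "c' k = infsum c (fibre k)" for k
  have vB: "\<And>i. i \<in> I \<Longrightarrow> set (v i) \<subseteq> Basis" using F by (simp add: has_monomial_expansion_def)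
  show ?thesis unfolding K_def[symmetric]
  proof (intro exI[of _ c'] ballI)
    fix y assume y: "y \<in> ball z0 r"
    define u where "u = y - z0"
    have "norm u < r" using y by (simp add: u_def dist_norm norm_minus_commute)
    then have abs: "(\<lambda>i. norm (c i * monomial (v i) u)) summable_on I"
      and hs: "((\<lambda>i. c i * monomial (v i) u) has_sum f y) I"
      using F by (auto simp: has_monomial_expansion_def u_def)
    define M where "M k = (\<Prod>b\<in>Basis. (u \<bullet> b) ^ k b)" for k
    have T: "c i * monomial (v i) u = c i * M (key i)" if "i \<in> I" for i
      using monomial_eq_prod_Basis[OF vB[OF that]] by (simp add: M_def key_def)
    have on_pairs: "((\<lambda>(k,i). c i * M k) has_sum f y) (Sigma K fibre)"
    proof -
      have inj: "inj_on (\<lambda>i. (key i, i)) I" by (auto intro: inj_onI)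
      have "key i \<in> K" if "i \<in> I" for i
        using vB[OF that] by (auto simp: K_def key_def count_eq_zero_iff)
      then have img: "(\<lambda>i. (key i, i)) ` I = Sigma K fibre"
        by (auto simp: fibre_def)
      have "((\<lambda>i. c i * M (key i)) has_sum f y) I"
        using has_sum_cong[of I "\<lambda>i. c i * monomial (v i) u" "\<lambda>i. c i * M (key i)"] hs T by blast
      then have "(((\<lambda>(k,i). c i * M k) \<circ> (\<lambda>i. (key i, i))) has_sum f y) I"
        by (simp add: o_def)
      then show ?thesis using has_sum_reindex[OF inj] img by metis
    qed
    have on_fibres: "((\<lambda>i. c i * M k) has_sum (c' k * M k)) (fibre k)" if "k \<in> K" for k
    proof (cases "M k = 0")
      case False
      have sub: "fibre k \<subseteq> I" by (auto simp: fibre_def)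
      have "(\<lambda>i. c i * monomial (v i) u) summable_on fibre k"
        using abs_summable_summable[OF summable_on_subset[OF abs sub]] .
      then have "(\<lambda>i. c i * M k) summable_on fibre k"
        by (rule summable_on_cong[THEN iffD1, rotated]) (use T sub fibre_def in auto)
      then have "(\<lambda>i. (c i * M k) * (1 / M k)) summable_on fibre k"
        by (rule summable_on_cmult_left)
      with False have "(c has_sum c' k) (fibre k)" by (simp add: c'_def)
      then show ?thesis by (rule has_sum_cmult_left)
    qed simp
    have "((\<lambda>k. c' k * M k) has_sum f y) K"
      by (rule has_sum_SigmaD[OF on_pairs]) (use on_fibres in simp)
    then show "((\<lambda>k. c' k * (\<Prod>b\<in>Basis. ((y - z0) \<bullet> b) ^ k b)) has_sum f y) K"
      by (simp add: M_def u_def)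
  qed
qed

lemma has_monomial_expansion_inner:
  fixes q z0 :: "'a::euclidean_space"
  shows "has_monomial_expansion (insert None (Some ` Basis))
           (\<lambda>i. case i of None \<Rightarrow> z0 \<bullet> q | Some b \<Rightarrow> q \<bullet> b)
           (\<lambda>i. case i of None \<Rightarrow> [] | Some b \<Rightarrow> [b]) (\<lambda>z. z \<bullet> q) z0 r"
  unfolding has_monomial_expansion_def
proof (intro conjI allI impI ballI)
  fix u :: 'a
  let ?T = "\<lambda>i. (case i of None \<Rightarrow> z0 \<bullet> q | Some b \<Rightarrow> q \<bullet> b) *
    monomial (case i of None \<Rightarrow> [] | Some b \<Rightarrow> [b]) u"
  show "(\<lambda>i. norm (?T i)) summable_on insert None (Some ` Basis)" by simp
  have "sum ?T (insert None (Some ` Basis)) = z0 \<bullet> q + (\<Sum>b\<in>Basis. q \<bullet> b * (u \<bullet> b))"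
    by (subst sum.insert) (auto simp: sum.reindex)
  also have "\<dots> = (z0 + u) \<bullet> q"
    by (simp add: inner_add_left euclidean_inner[of u q] mult.commute)
  finally show "(?T has_sum (z0 + u) \<bullet> q) (insert None (Some ` Basis))"
    by (intro has_sum_finiteI) auto
qed auto

lemma has_monomial_expansion_sum:
  fixes z0 :: "'a::euclidean_space"
  assumes J: "finite J" and F: "\<And>j. j \<in> J \<Longrightarrow> has_monomial_expansion (I j) (c j) (v j) (f j) z0 r"
  shows "has_monomial_expansion (Sigma J I) (\<lambda>(j,i). c j i) (\<lambda>(j,i). v j i) (\<lambda>z. \<Sum>j\<in>J. f j z) z0 r"
  unfolding has_monomial_expansion_def
proof (intro conjI allI impI ballI)
  fix x assume "x \<in> Sigma J I"
  then show "set (case x of (j, i) \<Rightarrow> v j i) \<subseteq> Basis"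
    using F by (auto simp: has_monomial_expansion_def)
next
  fix u :: 'a assume u: "norm u < r"
  define T where "T = (\<lambda>(j,i). c j i * monomial (v j i) u)"
  have eq: "(case x of (j, i) \<Rightarrow> c j i) * monomial (case x of (j, i) \<Rightarrow> v j i) u = T x" for x
    by (cases x) (simp add: T_def)
  have abs: "(\<lambda>i. norm (T (j, i))) summable_on I j"
    and hs: "((\<lambda>i. T (j, i)) has_sum f j (z0 + u)) (I j)" if "j \<in> J" for j
    using F[OF that] u by (auto simp: has_monomial_expansion_def T_def)
  have absT: "(\<lambda>x. norm (T x)) summable_on Sigma J I"
    using abs J by (intro Infinite_Sum.abs_summable_on_Sigma_iff[THEN iffD2] conjI ballI) auto
  then show "(\<lambda>x. norm ((case x of (j, i) \<Rightarrow> c j i) * monomial (case x of (j, i) \<Rightarrow> v j i) u))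
      summable_on Sigma J I"
    unfolding eq .
  have "(T has_sum (\<Sum>j\<in>J. f j (z0 + u))) (Sigma J I)"
    by (rule has_sum_SigmaI[OF hs]) (use J abs_summable_summable[OF absT] in auto)
  then show "((\<lambda>x. (case x of (j, i) \<Rightarrow> c j i) * monomial (case x of (j, i) \<Rightarrow> v j i) u)
      has_sum (\<Sum>j\<in>J. f j (z0 + u))) (Sigma J I)"
    unfolding eq .
qed

lemma has_monomial_expansion_mult:
  fixes z0 :: "'a::euclidean_space"
  assumes F1: "has_monomial_expansion I1 c1 v1 f1 z0 r" and F2: "has_monomial_expansion I2 c2 v2 f2 z0 r"
  shows "has_monomial_expansion (I1 \<times> I2) (\<lambda>(i,j). c1 i * c2 j) (\<lambda>(i,j). v1 i @ v2 j)
           (\<lambda>z. f1 z * f2 z) z0 r"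
  unfolding has_monomial_expansion_def
proof (intro conjI allI impI ballI)
  fix x assume "x \<in> I1 \<times> I2"
  then show "set (case x of (i, j) \<Rightarrow> v1 i @ v2 j) \<subseteq> Basis"
    using F1 F2 by (auto simp: has_monomial_expansion_def)
next
  fix u :: 'a assume u: "norm u < r"
  define T1 where "T1 i = c1 i * monomial (v1 i) u" for i
  define T2 where "T2 j = c2 j * monomial (v2 j) u" for j
  have abs1: "(\<lambda>i. norm (T1 i)) summable_on I1" and hs1: "(T1 has_sum f1 (z0 + u)) I1"
    unfolding T1_def using F1 u by (auto simp: has_monomial_expansion_def)
  have abs2: "(\<lambda>i. norm (T2 i)) summable_on I2" and hs2: "(T2 has_sum f2 (z0 + u)) I2"
    unfolding T2_def using F2 u by (auto simp: has_monomial_expansion_def)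
  have eq: "(case x of (i, j) \<Rightarrow> c1 i * c2 j) * monomial (case x of (i, j) \<Rightarrow> v1 i @ v2 j) u
      = T1 (fst x) * T2 (snd x)" for x
    by (cases x) (simp add: T1_def T2_def)
  have absP: "(\<lambda>x. norm (T1 (fst x) * T2 (snd x))) summable_on Sigma I1 (\<lambda>_. I2)"
  proof (rule Infinite_Sum.abs_summable_on_Sigma_iff[THEN iffD2], intro conjI ballI)
    fix i assume "i \<in> I1"
    show "(\<lambda>y. norm (T1 (fst (i, y)) * T2 (snd (i, y)))) summable_on I2"
      using summable_on_cmult_right[OF abs2, of "norm (T1 i)"] by (simp add: abs_mult)
  next
    define N2 where "N2 = infsum (\<lambda>j. norm (T2 j)) I2"
    have "N2 \<ge> 0" unfolding N2_def by (intro infsum_nonneg) auto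
    moreover have "infsum (\<lambda>y. \<bar>T1 x\<bar> * \<bar>T2 y\<bar>) I2 = \<bar>T1 x\<bar> * N2" for x
      by (simp add: infsum_cmult_right' N2_def)
    ultimately show "(\<lambda>x. norm (infsum (\<lambda>y. norm (T1 (fst (x, y)) * T2 (snd (x, y)))) I2)) summable_on I1"
      using summable_on_cmult_left[OF abs1, of N2] by (simp add: abs_mult)
  qed
  then show "(\<lambda>x. norm ((case x of (i, j) \<Rightarrow> c1 i * c2 j) * monomial (case x of (i, j) \<Rightarrow> v1 i @ v2 j) u))
      summable_on I1 \<times> I2"
    unfolding eq .
  have "((\<lambda>x. T1 (fst x) * T2 (snd x)) has_sum (f1 (z0 + u) * f2 (z0 + u))) (Sigma I1 (\<lambda>_. I2))"
    by (rule has_sum_SigmaI[OF _ has_sum_cmult_left[OF hs1]])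
       (use has_sum_cmult_right[OF hs2] abs_summable_summable[OF absP] in auto)
  then show "((\<lambda>x. (case x of (i, j) \<Rightarrow> c1 i * c2 j) * monomial (case x of (i, j) \<Rightarrow> v1 i @ v2 j) u)
      has_sum f1 (z0 + u) * f2 (z0 + u)) (I1 \<times> I2)"
    unfolding eq by simp
qed

text \<open>The hypothesis bounding the absolute sum of the monomials by \<open>\<rho>\<close> is what makes the
  expanded powers of the inner expansion absolutely summable.\<close>
lemma has_monomial_expansion_compose:
  fixes z0 :: "'a::euclidean_space" and t0 :: real
  assumes I: "finite I"
    and F: "has_monomial_expansion I c v (\<lambda>z. p z - t0) z0 r"
    and majorant: "\<And>u. norm u < r \<Longrightarrow> (\<Sum>i\<in>I. \<bar>c i * monomial (v i) u\<bar>) < \<rho>"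
    and h: "\<And>t. \<bar>t - t0\<bar> < \<rho> \<Longrightarrow>
              summable (\<lambda>m. \<bar>hc m\<bar> * \<bar>t - t0\<bar>^m) \<and> (\<lambda>m. hc m * (t - t0)^m) sums h t"
  shows "has_monomial_expansion (Sigma UNIV (\<lambda>m. PiE {..<m} (\<lambda>_. I)))
           (\<lambda>(m,\<tau>). hc m * (\<Prod>k<m. c (\<tau> k)))
           (\<lambda>(m,\<tau>). concat (map (\<lambda>k. v (\<tau> k)) [0..<m])) (\<lambda>z. h (p z)) z0 r"
  unfolding has_monomial_expansion_def
proof (intro conjI allI impI ballI)
  fix x :: "nat \<times> (nat \<Rightarrow> _)" assume "x \<in> Sigma UNIV (\<lambda>m. PiE {..<m} (\<lambda>_. I))"
  then show "set (case x of (m, \<tau>) \<Rightarrow> concat (map (\<lambda>k. v (\<tau> k)) [0..<m])) \<subseteq> Basis"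
    using F by (auto simp: has_monomial_expansion_def PiE_iff)
next
  fix u :: 'a assume u: "norm u < r"
  define T where "T i = c i * monomial (v i) u" for i
  define P where "P = (\<Sum>i\<in>I. T i)"
  define M where "M = (\<Sum>i\<in>I. \<bar>T i\<bar>)"
  define S where "S = Sigma (UNIV :: nat set) (\<lambda>m. PiE {..<m} (\<lambda>_. I))"
  have "(T has_sum p (z0 + u) - t0) I" unfolding T_def using F u by (auto simp: has_monomial_expansion_def)
  then have P: "P = p (z0 + u) - t0" using has_sum_unique I has_sum_finite P_def by blast
  have M: "M < \<rho>" "M \<ge> 0" using majorant[OF u] by (auto simp: M_def T_def sum_nonneg)
  have "\<bar>P\<bar> \<le> M" unfolding P_def M_def by (rule sum_abs)
  have eq: "(case x of (m, \<tau>) \<Rightarrow> hc m * (\<Prod>k<m. c (\<tau> k))) *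
      monomial (case x of (m, \<tau>) \<Rightarrow> concat (map (\<lambda>k. v (\<tau> k)) [0..<m])) u
      = hc (fst x) * (\<Prod>k<fst x. T (snd x k))" for x
    by (cases x) (simp add: monomial_concat T_def prod.distrib)
  have fin: "finite (PiE {..<m} (\<lambda>_. I))" for m :: nat using I by (intro finite_PiE) auto
  have powers: "(\<Sum>\<tau>\<in>PiE {..<m} (\<lambda>_. I). \<Prod>k<m. T (\<tau> k)) = P ^ m"
    "(\<Sum>\<tau>\<in>PiE {..<m} (\<lambda>_. I). \<Prod>k<m. \<bar>T (\<tau> k)\<bar>) = M ^ m" for m :: nat
    using prod_sum_PiE[of "{..<m}" "\<lambda>_. I" "\<lambda>_ i. T i"] prod_sum_PiE[of "{..<m}" "\<lambda>_. I" "\<lambda>_ i. \<bar>T i\<bar>"] I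
    by (simp_all add: P_def M_def)
  have absP: "(\<lambda>x. norm (hc (fst x) * (\<Prod>k<fst x. T (snd x k)))) summable_on S"
    unfolding S_def
  proof (rule Infinite_Sum.abs_summable_on_Sigma_iff[THEN iffD2], intro conjI ballI)
    fix m :: nat
    show "(\<lambda>y. norm (hc (fst (m, y)) * (\<Prod>k<fst (m, y). T (snd (m, y) k)))) summable_on PiE {..<m} (\<lambda>_. I)"
      using fin by simp
  next
    have e: "infsum (\<lambda>y. norm (hc (fst (m, y)) * (\<Prod>k<fst (m, y). T (snd (m, y) k)))) (PiE {..<m} (\<lambda>_. I))
        = \<bar>hc m\<bar> * M ^ m" for m :: nat
      using fin[of m] by (simp add: abs_mult abs_prod sum_distrib_left[symmetric] powers)
    have "summable (\<lambda>m. \<bar>hc m\<bar> * M ^ m)" using conjunct1[OF h[of "t0 + M"]] M by simp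
    then have "(\<lambda>m. \<bar>hc m\<bar> * M ^ m) summable_on UNIV"
      using summable_on_UNIV_nonneg_real_iff M by simp
    then show "(\<lambda>x. norm (infsum (\<lambda>y. norm (hc (fst (x, y)) * (\<Prod>k<fst (x, y). T (snd (x, y) k))))
        (PiE {..<x} (\<lambda>_. I)))) summable_on UNIV"
      unfolding e using M by (simp add: abs_mult)
  qed
  then show "(\<lambda>x. norm ((case x of (m, \<tau>) \<Rightarrow> hc m * (\<Prod>k<m. c (\<tau> k))) *
      monomial (case x of (m, \<tau>) \<Rightarrow> concat (map (\<lambda>k. v (\<tau> k)) [0..<m])) u)) summable_on S"
    unfolding eq .
  have "((\<lambda>x. hc (fst x) * (\<Prod>k<fst x. T (snd x k))) has_sum h (p (z0 + u))) S"
    unfolding S_def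
  proof (rule has_sum_SigmaI)
    fix m :: nat
    show "((\<lambda>y. hc (fst (m, y)) * (\<Prod>k<fst (m, y). T (snd (m, y) k))) has_sum hc m * P ^ m)
        (PiE {..<m} (\<lambda>_. I))"
      using has_sum_finite[OF fin[of m], of "\<lambda>y. hc m * (\<Prod>k<m. T (y k))"]
      by (simp add: sum_distrib_left[symmetric] powers)
  next
    have "\<bar>p (z0 + u) - t0\<bar> < \<rho>" using \<open>\<bar>P\<bar> \<le> M\<close> M P by simp
    from h[OF this] have "summable (\<lambda>m. norm (hc m * P ^ m))" "(\<lambda>m. hc m * P ^ m) sums h (p (z0 + u))"
      unfolding P by (simp_all add: abs_mult power_abs)
    then show "((\<lambda>m. hc m * P ^ m) has_sum h (p (z0 + u))) UNIV"
      by (rule norm_summable_imp_has_sum)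
  next
    show "(\<lambda>x. hc (fst x) * (\<Prod>k<fst x. T (snd x k))) summable_on Sigma UNIV (\<lambda>m. PiE {..<m} (\<lambda>_. I))"
      using abs_summable_summable[OF absP] by (simp add: S_def)
  qed
  then show "((\<lambda>x. (case x of (m, \<tau>) \<Rightarrow> hc m * (\<Prod>k<m. c (\<tau> k))) *
      monomial (case x of (m, \<tau>) \<Rightarrow> concat (map (\<lambda>k. v (\<tau> k)) [0..<m])) u) has_sum h (p (z0 + u))) S"
    unfolding eq .
qed

lemma has_monomial_expansion_norm_fst_sq:
  fixes z0 :: "'a::euclidean_space \<times> 'b::euclidean_space"
  shows "has_monomial_expansion (Basis \<times> UNIV) (\<lambda>(b,t). if t then 2 * (fst z0 \<bullet> b) else 1)
           (\<lambda>(b,t). if t then [(b,0)] else [(b,0),(b,0)])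
           (\<lambda>z. norm (fst z)^2 - norm (fst z0)^2) z0 r"
  unfolding has_monomial_expansion_def
proof (intro conjI allI impI ballI)
  fix x :: "'a \<times> bool" assume "x \<in> Basis \<times> UNIV"
  then show "set (case x of (b, t) \<Rightarrow> if t then [(b, 0)] else [(b, 0), (b, 0)]) \<subseteq> Basis"
    by (auto simp: Basis_prod_def split: if_splits)
next
  fix u :: "'a \<times> 'b"
  let ?T = "\<lambda>x. (case x of (b, t) \<Rightarrow> if t then 2 * (fst z0 \<bullet> b) else 1) *
      monomial (case x of (b, t) \<Rightarrow> if t then [(b, 0)] else [(b, 0), (b, 0)]) u"
  show "(\<lambda>x. norm (?T x)) summable_on Basis \<times> UNIV" by simp
  have "sum ?T (Basis \<times> UNIV) = (\<Sum>b\<in>Basis. \<Sum>t\<in>UNIV. ?T (b, t))"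
    by (rule sum.cartesian_product')
  also have "\<dots> = (\<Sum>b\<in>Basis. 2 * (fst z0 \<bullet> b) * (fst u \<bullet> b) + (fst u \<bullet> b) * (fst u \<bullet> b))"
    by (cases u) (simp add: UNIV_bool add.commute)
  also have "\<dots> = 2 * (fst z0 \<bullet> fst u) + fst u \<bullet> fst u"
    by (simp add: sum.distrib euclidean_inner[of "fst z0" "fst u"] euclidean_inner[of "fst u" "fst u"]
        sum_distrib_left mult.assoc)
  also have "\<dots> = norm (fst (z0 + u))^2 - norm (fst z0)^2"
    by (simp add: power2_norm_eq_inner inner_add_left inner_add_right inner_commute)
  finally show "(?T has_sum norm (fst (z0 + u))^2 - norm (fst z0)^2) (Basis \<times> UNIV)"
    by (intro has_sum_finiteI) auto
qed

lemma small_sum_abs_nonconstant_monomials: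
  fixes z0 :: "'a::euclidean_space"
  assumes I: "finite I" and F: "has_monomial_expansion I c v f z0 r"
    and nonconstant: "\<And>i. i \<in> I \<Longrightarrow> v i \<noteq> []" and \<rho>: "\<rho> > 0"
  obtains \<delta> where "\<delta> > 0" "\<And>u::'a. norm u < \<delta> \<Longrightarrow> (\<Sum>i\<in>I. \<bar>c i * monomial (v i) u\<bar>) < \<rho>"
proof
  define K where "K = (\<Sum>i\<in>I. \<bar>c i\<bar>)"
  have K: "K \<ge> 0" by (simp add: K_def sum_nonneg)
  show "min 1 (\<rho> / (K + 1)) > 0" using \<rho> K by simp
  fix u :: 'a assume u: "norm u < min 1 (\<rho> / (K + 1))"
  have "\<bar>c i * monomial (v i) u\<bar> \<le> \<bar>c i\<bar> * norm u" if "i \<in> I" for i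
  proof -
    have "\<bar>monomial (v i) u\<bar> \<le> norm u ^ length (v i)"
      using F that by (intro abs_monomial_le) (auto simp: has_monomial_expansion_def)
    also have "\<dots> \<le> norm u ^ 1"
      using u nonconstant[OF that] by (intro power_decreasing) (auto simp: Suc_le_eq)
    finally show ?thesis by (simp add: abs_mult mult_left_mono)
  qed
  then have "(\<Sum>i\<in>I. \<bar>c i * monomial (v i) u\<bar>) \<le> K * norm u"
    by (simp add: K_def sum_distrib_right sum_mono)
  also have "\<dots> \<le> (K + 1) * norm u" by (simp add: mult_right_mono)
  also have "\<dots> < \<rho>" using u K by (simp add: field_simps)
  finally show "(\<Sum>i\<in>I. \<bar>c i * monomial (v i) u\<bar>) < \<rho>" .
qed

definition G2 :: "real \<Rightarrow> 'a::euclidean_space \<times> 'a \<times> 'a \<times> 'a \<times> 'a \<Rightarrow> 'a" where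
  "G2 \<alpha> = (\<lambda>(a, b, c, d, e). (g_radial (\<alpha>/2) (norm a ^ 2) * (c \<bullet> d)) *\<^sub>R e)"

lemma open_norm_fst_not_0_1:
  "open ({(a, b, c, d, e). norm a \<noteq> 0 \<and> norm a \<noteq> 1} ::
     ('a::real_normed_vector \<times> 'b::topological_space \<times> 'c::topological_space \<times>
      'd::topological_space \<times> 'e::topological_space) set)"
proof -
  have "({(a, b, c, d, e). norm a \<noteq> 0 \<and> norm a \<noteq> 1} :: ('a \<times> 'b \<times> 'c \<times> 'd \<times> 'e) set) =
      {z. norm (fst z) \<noteq> 0} \<inter> {z. norm (fst z) \<noteq> 1}"
    by auto
  moreover have "open {z::'a \<times> 'b \<times> 'c \<times> 'd \<times> 'e. norm (fst z) \<noteq> 0}"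
    "open {z::'a \<times> 'b \<times> 'c \<times> 'd \<times> 'e. norm (fst z) \<noteq> 1}"
    by (rule open_Collect_neq; intro continuous_intros)+
  ultimately show ?thesis by auto
qed

lemma real_analytic_on_G2:
  "real_analytic_on (G2 \<alpha> :: 'a::euclidean_space \<times> 'a \<times> 'a \<times> 'a \<times> 'a \<Rightarrow> 'a)
     {(a, b, c, d, e). norm a \<noteq> 0 \<and> norm a \<noteq> 1}"
  unfolding real_analytic_on_def
proof (intro conjI ballI open_norm_fst_not_0_1)
  fix q :: 'a
  show "real_analytic_on_real (\<lambda>z. G2 \<alpha> z \<bullet> q) {(a, b, c, d, e). norm a \<noteq> 0 \<and> norm a \<noteq> 1}"
    unfolding real_analytic_on_real_def
  proof
    fix z0 :: "'a \<times> 'a \<times> 'a \<times> 'a \<times> 'a"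
    assume "z0 \<in> {(a, b, c, d, e). norm a \<noteq> 0 \<and> norm a \<noteq> 1}"
    then have n0: "norm (fst z0) \<noteq> 0" and n1: "norm (fst z0) \<noteq> 1" by (auto simp: case_prod_unfold)
    define t0 where "t0 = norm (fst z0)^2"
    have "t0 \<noteq> 1"
    proof
      assume "t0 = 1"
      then have "norm (fst z0) = 1 \<or> norm (fst z0) = -1" by (simp only: t0_def power2_eq_1_iff)
      with n1 norm_ge_zero[of "fst z0"] show False by linarith
    qed
    moreover have "t0 > 0" using n0 by (simp add: t0_def)
    ultimately obtain \<rho> hc where "\<rho> > 0" and g: "\<And>t. \<bar>t - t0\<bar> < \<rho> \<Longrightarrow>
        summable (\<lambda>m. \<bar>hc m\<bar> * \<bar>t - t0\<bar>^m) \<and> (\<lambda>m. hc m * (t - t0)^m) sums g_radial (\<alpha>/2) t"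
      using g_radial_power_series[of t0 "\<alpha>/2"] by blast
    note norm_sq = has_monomial_expansion_norm_fst_sq[of z0]
    have fin: "finite (Basis \<times> (UNIV :: bool set) :: ('a \<times> bool) set)" by simp
    obtain \<delta> where "\<delta> > 0" and small: "\<And>u :: 'a \<times> 'a \<times> 'a \<times> 'a \<times> 'a. norm u < \<delta> \<Longrightarrow>
        (\<Sum>x\<in>Basis \<times> UNIV. \<bar>(case x of (b, t) \<Rightarrow> if t then 2 * (fst z0 \<bullet> b) else 1) *
          monomial (case x of (b, t) \<Rightarrow> if t then [(b, 0)] else [(b, 0), (b, 0)]) u\<bar>) < \<rho>"
      by (rule small_sum_abs_nonconstant_monomials[OF fin norm_sq _ \<open>\<rho> > 0\<close>]) (auto split: if_splits)
    note g_part = has_monomial_expansion_compose[OF fin norm_sq small g[unfolded t0_def]]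
    note cd_part = has_monomial_expansion_sum[where J = Basis and
        f = "\<lambda>j z. z \<bullet> (0, 0, j, 0, 0) * (z \<bullet> (0, 0, 0, j, 0))",
        OF finite_Basis has_monomial_expansion_mult[OF has_monomial_expansion_inner has_monomial_expansion_inner]]
    note e_part = has_monomial_expansion_inner[where q = "(0, 0, 0, 0, q)"]
    have "g_radial (\<alpha>/2) (norm (fst z)^2) * (\<Sum>j\<in>Basis. z \<bullet> (0, 0, j, 0, 0) * (z \<bullet> (0, 0, 0, j, 0))) *
        (z \<bullet> (0, 0, 0, 0, q)) = G2 \<alpha> z \<bullet> q" for z
      by (cases z) (simp add: G2_def euclidean_inner[symmetric])
    note expansion = has_monomial_expansion_cong[OF has_monomial_expansion_mult[OF
          has_monomial_expansion_mult[OF g_part cd_part] e_part] this]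
    have "\<exists>c. \<forall>y\<in>ball z0 \<delta>. ((\<lambda>k. c k * (\<Prod>b\<in>Basis. ((y - z0) \<bullet> b) ^ k b)) has_sum G2 \<alpha> y \<bullet> q)
        {k. \<forall>b. b \<notin> Basis \<longrightarrow> k b = 0}"
      by (rule has_monomial_expansion_imp_power_series[OF expansion])
    with \<open>\<delta> > 0\<close> show "\<exists>r>0. \<exists>c. \<forall>y\<in>ball z0 r.
        ((\<lambda>k. c k * (\<Prod>b\<in>Basis. ((y - z0) \<bullet> b) ^ k b)) has_sum G2 \<alpha> y \<bullet> q)
        {k. \<forall>b. b \<notin> Basis \<longrightarrow> k b = 0}"
      by blast
  qed
qed

lemma smooth_fun_dot_ddot:
  assumes "smooth_fun g"
  shows "(g has_vector_derivative dot g t) (at t)" "(dot g has_vector_derivative ddot g t) (at t)"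
    and "continuous_on UNIV (dot g)" "continuous_on UNIV (ddot g)"
proof -
  obtain D where D0: "D 0 = g" and D: "\<And>k t. (D k has_vector_derivative D (Suc k) t) (at t)"
    using assms unfolding smooth_fun_def by blast
  have dot: "dot g = D 1" using D[of 0] by (auto simp: D0 dot_def vector_derivative_at)
  have ddot: "ddot g = D 2" using D[of 1] by (auto simp: dot ddot_def vector_derivative_at numeral_2_eq_2)
  have cont: "continuous_on UNIV (D k)" for k
    by (rule continuous_at_imp_continuous_on) (use has_vector_derivative_continuous[OF D] in blast)
  show "(g has_vector_derivative dot g t) (at t)" using D[of 0] by (simp add: D0 dot)
  show "(dot g has_vector_derivative ddot g t) (at t)" using D[of 1] by (simp add: dot ddot numeral_2_eq_2)
  show "continuous_on UNIV (dot g)" "continuous_on UNIV (ddot g)" by (simp_all add: dot ddot cont)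
qed

lemma derivative_orthogonal_of_norm_1:
  fixes U A :: "real \<Rightarrow> 'a::real_inner"
  assumes U: "(U has_vector_derivative A x) (at x)" and norm: "\<And>t. norm (U t) = 1"
  shows "A x \<bullet> U x = 0"
proof -
  have "((\<lambda>t. U t \<bullet> U t) has_derivative (\<lambda>h. U x \<bullet> (h *\<^sub>R A x) + (h *\<^sub>R A x) \<bullet> U x)) (at x)"
    using has_derivative_inner[OF U[unfolded has_vector_derivative_def] U[unfolded has_vector_derivative_def]] .
  moreover have "((\<lambda>t. U t \<bullet> U t) has_derivative (\<lambda>h. 0)) (at x)"
    using norm by (simp add: dot_square_norm)
  ultimately have "(\<lambda>h. U x \<bullet> (h *\<^sub>R A x) + (h *\<^sub>R A x) \<bullet> U x) = (\<lambda>h. 0)"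
    by (rule has_derivative_unique)
  then have "U x \<bullet> A x + A x \<bullet> U x = 0" by (metis scaleR_one)
  then show ?thesis by (simp add: inner_commute)
qed

lemma periodic_injective_chord_nonzero:
  fixes g :: "real \<Rightarrow> 'a"
  assumes periodic: "\<And>x. g (x + 1) = g x" and inj: "inj_on g {0..<1}"
    and w: "w \<noteq> 0" "\<bar>w\<bar> \<le> 1/2"
  shows "g (x + w) \<noteq> g x"
proof
  assume eq: "g (x + w) = g x"
  interpret periodic_fun_simple' g by standard (rule periodic)
  have g_frac: "g (frac t) = g t" for t
    using plus_of_int[of "frac t" "\<lfloor>t\<rfloor>"] by (simp add: frac_def)
  have "frac (x + w) = frac x"
    using inj_onD[OF inj, of "frac (x + w)" "frac x"] eq g_frac by (simp add: frac_lt_1)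
  then obtain n where "x + w = x + of_int n" by (rule frac_eqE)
  then have "w = of_int n" by simp
  with w show False by (cases "n = 0") auto
qed

lemma integral_affine_inner_scaleR:
  fixes f :: "real \<Rightarrow> 'v::euclidean_space" and e :: "'w::real_normed_vector"
  assumes "continuous_on {0..1} f"
  shows "integral {0..1} (\<lambda>s. (k + l * (f s \<bullet> d)) *\<^sub>R e) = (k + l * (d \<bullet> integral {0..1} f)) *\<^sub>R e"
proof -
  have "(f has_integral integral {0..1} f) {0..1}"
    using integrable_continuous_real[OF assms] by (rule integrable_integral)
  then have "((\<lambda>s. f s \<bullet> d) has_integral (integral {0..1} f \<bullet> d)) {0..1}"
    using has_integral_linear[OF _ bounded_linear_inner_left] by (simp add: o_def)
  moreover have "integral {0..1} f \<bullet> d = d \<bullet> integral {0..1} f" by (rule inner_commute)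
  ultimately have "((\<lambda>s. f s \<bullet> d) has_integral (d \<bullet> integral {0..1} f)) {0..1}" by simp
  then have "((\<lambda>s. k + l * (f s \<bullet> d)) has_integral (k + l * (d \<bullet> integral {0..1} f))) {0..1}"
    using has_integral_add[OF has_integral_const_real[of k 0 1] has_integral_mult_right] by simp
  then show ?thesis by (intro integral_unique has_integral_scaleR_left)
qed

lemma integral_derivative_along_segment:
  fixes U A :: "real \<Rightarrow> 'a::euclidean_space"
  assumes U: "\<And>t. (U has_vector_derivative A t) (at t)" and A: "continuous_on UNIV A"
  shows "v *\<^sub>R integral {0..1} (\<lambda>t. A (p + t * v)) = U (p + v) - U p"
proof -
  have "((\<lambda>t. p + t * v) has_real_derivative v) (at t)" for t
    by (auto intro!: derivative_eq_intros)
  then have segment: "((\<lambda>t. p + t * v) has_vector_derivative v) (at t)" for t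
    by (simp add: has_real_derivative_iff_has_vector_derivative)
  have "((\<lambda>t. U (p + t * v)) has_vector_derivative v *\<^sub>R A (p + t * v)) (at t)" for t
    using vector_diff_chain_at[OF segment U] by (simp add: o_def)
  then have "((\<lambda>t. v *\<^sub>R A (p + t * v)) has_integral U (p + 1 * v) - U (p + 0 * v)) {0..1}"
    by (intro fundamental_theorem_of_calculus) (auto intro: has_vector_derivative_at_within)
  moreover have "continuous_on {0..1} (\<lambda>t. A (p + t * v))"
    by (rule continuous_on_compose2[OF A]) (auto intro!: continuous_intros)
  then have "((\<lambda>t. v *\<^sub>R A (p + t * v)) has_integral v *\<^sub>R integral {0..1} (\<lambda>t. A (p + t * v))) {0..1}"
    by (intro has_integral_cmul integrable_integral integrable_continuous_real)
  ultimately show ?thesis by (simp add: has_integral_unique)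
qed

lemma g_radial_identity:
  fixes w n \<alpha> :: real
  assumes w: "w \<noteq> 0" and n: "n > 0"
  shows "(1 / \<bar>w\<bar> powr (\<alpha> - 2)) * (2 * g_radial (\<alpha>/2) (n^2) * (1 - n^2) / w^2)
       = 1 / (\<bar>w\<bar> * n) powr \<alpha> - 1 / \<bar>w\<bar> powr \<alpha>"
proof -
  define P where "P = n powr \<alpha>"
  have P: "P > 0" using n by (simp add: P_def)
  have "n^2 = n powr 2" using powr_realpow[OF n, of 2] by simp
  then have nP: "(n^2) powr (\<alpha>/2) = P" by (simp add: P_def powr_powr)
  have g: "2 * g_radial (\<alpha>/2) (n^2) * (1 - n^2) = (1 - P) / P"
  proof (cases "n = 1")
    case True then show ?thesis by (simp add: g_radial_def P_def)
  next
    case False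
    then have "1 - n^2 \<noteq> 0" using n by (simp add: power2_eq_1_iff)
    with P show ?thesis by (simp add: g_radial_def nP divide_simps)
  qed
  have aw: "\<bar>w\<bar> > 0" using w by simp
  have "w^2 = \<bar>w\<bar> powr 2" using powr_realpow[OF aw, of 2] by simp
  moreover have "\<bar>w\<bar> powr (\<alpha> - 2) * \<bar>w\<bar> powr 2 = \<bar>w\<bar> powr (\<alpha> - 2 + 2)"
    by (rule powr_add[symmetric])
  ultimately have ww: "\<bar>w\<bar> powr (\<alpha> - 2) * w^2 = \<bar>w\<bar> powr \<alpha>" by simp
  have "(1 / \<bar>w\<bar> powr (\<alpha> - 2)) * (2 * g_radial (\<alpha>/2) (n^2) * (1 - n^2) / w^2)
      = (1 - P) / P / \<bar>w\<bar> powr \<alpha>"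
    by (simp add: g flip: ww)
  also have "\<dots> = 1 / (\<bar>w\<bar> * n) powr \<alpha> - 1 / \<bar>w\<bar> powr \<alpha>"
    using aw n P by (simp add: powr_mult P_def divide_simps)
  finally show ?thesis .
qed

lemma quadruple_integral_G2:
  fixes U A :: "real \<Rightarrow> 'a::euclidean_space" and a b e :: 'a
  assumes U: "\<And>t. (U has_vector_derivative A t) (at t)"
    and cont: "continuous_on UNIV U" "continuous_on UNIV A"
    and norm: "\<And>t. norm (U t) = 1" and w: "w \<noteq> 0"
    and a: "a = integral {0..1} (\<lambda>t. U (x + t * w))"
  shows "integral {0..1} (\<lambda>s2. integral {0..1} (\<lambda>s1.
           integral {0..1} (\<lambda>\<phi>2. integral {0..1} (\<lambda>\<phi>1.
             (s1 - s2)^2 *\<^sub>R G2 \<alpha> (a, b, A (x + s2 * w + (s1 - s2) * \<phi>1 * w),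
                                   A (x + s2 * w + (s1 - s2) * \<phi>2 * w), e)))))
       = (2 * g_radial (\<alpha>/2) (norm a ^ 2) * (1 - norm a ^ 2) / w^2) *\<^sub>R e"
proof -
  define g where "g = g_radial (\<alpha>/2) (norm a ^ 2)"
  define k where "k = 2 * g / w^2"
  define C where "C s1 s2 = integral {0..1} (\<lambda>\<phi>. A (x + s2 * w + \<phi> * ((s1 - s2) * w)))" for s1 s2
  have segment: "x + s2 * w + (s1 - s2) * \<phi> * w = x + s2 * w + \<phi> * ((s1 - s2) * w)" for s1 s2 \<phi>
    by (simp add: algebra_simps)
  have cont_segment: "continuous_on {0..1} (\<lambda>t. F (p + t * v))"
    if "continuous_on UNIV F" for F :: "real \<Rightarrow> 'a" and p v
    by (rule continuous_on_compose2[OF that]) (auto intro!: continuous_intros)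
  note integral_inner = integral_affine_inner_scaleR[where k = 0, simplified]
  have G2: "(s1 - s2)^2 *\<^sub>R G2 \<alpha> (a, b, c, d, e) = ((s1 - s2)^2 * g * (c \<bullet> d)) *\<^sub>R e" for s1 s2 c d
    by (simp add: G2_def g_def)
  have \<phi>1: "integral {0..1} (\<lambda>\<phi>1. (s1 - s2)^2 *\<^sub>R G2 \<alpha> (a, b, A (x + s2 * w + (s1 - s2) * \<phi>1 * w), d, e))
      = ((s1 - s2)^2 * g * (d \<bullet> C s1 s2)) *\<^sub>R e" for s1 s2 d
    unfolding G2 segment C_def by (rule integral_inner[OF cont_segment[OF cont(2)]])
  have \<phi>2: "integral {0..1} (\<lambda>\<phi>2. ((s1 - s2)^2 * g * (A (x + s2 * w + (s1 - s2) * \<phi>2 * w) \<bullet> C s1 s2)) *\<^sub>R e)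
      = ((s1 - s2)^2 * g * (C s1 s2 \<bullet> C s1 s2)) *\<^sub>R e" for s1 s2
    using integral_inner[OF cont_segment[OF cont(2)], of "(s1 - s2)^2 * g" "x + s2 * w" "(s1 - s2) * w" "C s1 s2" e]
    by (simp only: segment C_def)
  text \<open>By the fundamental theorem of calculus, \<open>(s1 - s2) w C s1 s2\<close> is a chord of the unit
    vector field \<open>U\<close>.\<close>
  have chord: "(s1 - s2)^2 * (C s1 s2 \<bullet> C s1 s2) = (2 - 2 * (U (x + s1 * w) \<bullet> U (x + s2 * w))) / w^2"
    for s1 s2
  proof -
    have "((s1 - s2) * w) *\<^sub>R C s1 s2 = U (x + s2 * w + (s1 - s2) * w) - U (x + s2 * w)"
      unfolding C_def by (rule integral_derivative_along_segment[OF U cont(2)])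
    moreover have "x + s2 * w + (s1 - s2) * w = x + s1 * w" by (simp add: algebra_simps)
    ultimately have diff: "((s1 - s2) * w) *\<^sub>R C s1 s2 = U (x + s1 * w) - U (x + s2 * w)" by simp
    have unit: "U t \<bullet> U t = 1" for t using norm[of t] by (simp add: dot_square_norm)
    have "w^2 * ((s1 - s2)^2 * (C s1 s2 \<bullet> C s1 s2)) =
        (((s1 - s2) * w) *\<^sub>R C s1 s2) \<bullet> (((s1 - s2) * w) *\<^sub>R C s1 s2)"
      by (simp add: power2_eq_square algebra_simps)
    also have "\<dots> = 2 - 2 * (U (x + s1 * w) \<bullet> U (x + s2 * w))"
      unfolding diff by (simp add: inner_diff_left inner_diff_right unit inner_commute)
    finally show ?thesis using w by (simp add: field_simps)
  qed
  have inner_two: "integral {0..1} (\<lambda>\<phi>2. integral {0..1} (\<lambda>\<phi>1. (s1 - s2)^2 *\<^sub>R G2 \<alpha> (a, b,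
        A (x + s2 * w + (s1 - s2) * \<phi>1 * w), A (x + s2 * w + (s1 - s2) * \<phi>2 * w), e)))
      = (k + (- k) * (U (x + s1 * w) \<bullet> U (x + s2 * w))) *\<^sub>R e" for s1 s2
  proof -
    have "(s1 - s2)^2 * g * (C s1 s2 \<bullet> C s1 s2) = g * ((s1 - s2)^2 * (C s1 s2 \<bullet> C s1 s2))" by simp
    also have "\<dots> = k + (- k) * (U (x + s1 * w) \<bullet> U (x + s2 * w))"
      unfolding chord k_def using w by (simp add: field_simps)
    finally show ?thesis by (simp only: \<phi>1 \<phi>2)
  qed
  have s1: "integral {0..1} (\<lambda>s1. (k + (- k) * (U (x + s1 * w) \<bullet> d)) *\<^sub>R e)
      = (k + (- k) * (d \<bullet> a)) *\<^sub>R e" for d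
    unfolding a by (rule integral_affine_inner_scaleR[OF cont_segment[OF cont(1)]])
  have "integral {0..1} (\<lambda>s2. integral {0..1} (\<lambda>s1. integral {0..1} (\<lambda>\<phi>2. integral {0..1} (\<lambda>\<phi>1.
        (s1 - s2)^2 *\<^sub>R G2 \<alpha> (a, b, A (x + s2 * w + (s1 - s2) * \<phi>1 * w),
                              A (x + s2 * w + (s1 - s2) * \<phi>2 * w), e)))))
      = integral {0..1} (\<lambda>s2. (k + (- k) * (U (x + s2 * w) \<bullet> a)) *\<^sub>R e)"
    by (simp only: inner_two s1)
  also have "\<dots> = (k + (- k) * (a \<bullet> a)) *\<^sub>R e"
    by (rule s1)
  also have "\<dots> = (2 * g * (1 - norm a ^ 2) / w^2) *\<^sub>R e"
    using w by (intro arg_cong[where f = "\<lambda>r. r *\<^sub>R e"]) (simp add: k_def dot_square_norm field_simps)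
  finally show ?thesis by (simp only: g_def)
qed

lemma R2_integrand_eq_quadruple_integral:
  fixes \<gamma> U A :: "real \<Rightarrow> 'a::euclidean_space"
  assumes \<gamma>: "\<And>t. (\<gamma> has_vector_derivative U t) (at t)" and U: "\<And>t. (U has_vector_derivative A t) (at t)"
    and cont: "continuous_on UNIV U" "continuous_on UNIV A"
    and norm: "\<And>t. norm (U t) = 1" and w: "w \<noteq> 0" and chord: "\<gamma> (x + w) \<noteq> \<gamma> x"
  shows "(1 / norm (\<gamma> (x + w) - \<gamma> x) powr \<alpha> - 1 / \<bar>w\<bar> powr \<alpha>) *\<^sub>R A x =
    (1 / \<bar>w\<bar> powr (\<alpha> - 2)) *\<^sub>R
         integral {0..1} (\<lambda>s2. integral {0..1} (\<lambda>s1.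
           integral {0..1} (\<lambda>\<phi>2. integral {0..1} (\<lambda>\<phi>1.
             (s1 - s2)^2 *\<^sub>R
             G2 \<alpha> (integral {0..1} (\<lambda>t. U (x + t * w)), U x,
                A (x + s2 * w + (s1 - s2) * \<phi>1 * w), A (x + s2 * w + (s1 - s2) * \<phi>2 * w), A x)))))"
proof -
  define a where "a = integral {0..1} (\<lambda>t. U (x + t * w))"
  have chord_a: "w *\<^sub>R a = \<gamma> (x + w) - \<gamma> x"
    unfolding a_def by (rule integral_derivative_along_segment[OF \<gamma> cont(1)])
  then have "a \<noteq> 0" using chord by auto
  have "1 / norm (\<gamma> (x + w) - \<gamma> x) powr \<alpha> - 1 / \<bar>w\<bar> powr \<alpha>
      = (1 / \<bar>w\<bar> powr (\<alpha> - 2)) * (2 * g_radial (\<alpha>/2) (norm a ^ 2) * (1 - norm a ^ 2) / w^2)"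
    unfolding chord_a[symmetric] norm_scaleR
    by (rule g_radial_identity[OF w, symmetric]) (use \<open>a \<noteq> 0\<close> in simp)
  then show ?thesis
    unfolding a_def[symmetric] quadruple_integral_G2[OF U cont norm w a_def] by (simp only: scaleR_scaleR)
qed

lemma integral_scaleR_orthogonal:
  fixes f :: "'a::euclidean_space \<Rightarrow> real" and e u :: "'b::euclidean_space"
  assumes "e \<bullet> u = 0"
  shows "integral S (\<lambda>w. f w *\<^sub>R e) \<bullet> u = 0"
proof (cases "(\<lambda>w. f w *\<^sub>R e) integrable_on S")
  case True
  have "((\<lambda>w. (f w *\<^sub>R e) \<bullet> u) has_integral integral S (\<lambda>w. f w *\<^sub>R e) \<bullet> u) S"
    using has_integral_linear[OF integrable_integral[OF True] bounded_linear_inner_left]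
    by (simp only: o_def)
  moreover have "(\<lambda>w. (f w *\<^sub>R e) \<bullet> u) = (\<lambda>w. 0)" using assms by simp
  ultimately have "((\<lambda>w. 0::real) has_integral integral S (\<lambda>w. f w *\<^sub>R e) \<bullet> u) S" by simp
  then show ?thesis using has_integral_0 has_integral_unique by blast
qed (simp add: not_integrable_integral)

lemma Pperp_R2_eq_integral_G2:
  fixes \<gamma> :: "real \<Rightarrow> real^'n"
  assumes curve: "arclength_simple_closed_curve \<gamma>" and \<epsilon>: "0 < \<epsilon>" "\<epsilon> \<le> 1/2"
  shows "Pperp (dot \<gamma> x) (R2 \<alpha> \<epsilon> \<gamma> x) =
       integral {w. \<epsilon> \<le> \<bar>w\<bar> \<and> \<bar>w\<bar> \<le> 1/2} (\<lambda>w.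
         (1 / \<bar>w\<bar> powr (\<alpha> - 2)) *\<^sub>R
         integral {0..1} (\<lambda>s2. integral {0..1} (\<lambda>s1.
           integral {0..1} (\<lambda>\<phi>2. integral {0..1} (\<lambda>\<phi>1.
             (s1 - s2)^2 *\<^sub>R
             G2 \<alpha> (integral {0..1} (\<lambda>t. dot \<gamma> (x + t * w)), dot \<gamma> x,
                ddot \<gamma> (x + s2 * w + (s1 - s2) * \<phi>1 * w), ddot \<gamma> (x + s2 * w + (s1 - s2) * \<phi>2 * w),
                ddot \<gamma> x))))))"
proof -
  have smooth: "smooth_fun \<gamma>" and periodic: "\<And>x. \<gamma> (x + 1) = \<gamma> x" and inj: "inj_on \<gamma> {0..<1}"
    and unit: "\<And>t. norm (dot \<gamma> t) = 1"
    using curve by (auto simp: arclength_simple_closed_curve_def)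
  note derivs = smooth_fun_dot_ddot[OF smooth]
  have "ddot \<gamma> x \<bullet> dot \<gamma> x = 0"
    by (rule derivative_orthogonal_of_norm_1[OF derivs(2) unit])
  then have "Pperp (dot \<gamma> x) (R2 \<alpha> \<epsilon> \<gamma> x) = R2 \<alpha> \<epsilon> \<gamma> x"
    unfolding Pperp_def R2_def by (simp add: integral_scaleR_orthogonal)
  also have "\<dots> = integral {w. \<epsilon> \<le> \<bar>w\<bar> \<and> \<bar>w\<bar> \<le> 1/2} (\<lambda>w.
         (1 / \<bar>w\<bar> powr (\<alpha> - 2)) *\<^sub>R
         integral {0..1} (\<lambda>s2. integral {0..1} (\<lambda>s1.
           integral {0..1} (\<lambda>\<phi>2. integral {0..1} (\<lambda>\<phi>1.
             (s1 - s2)^2 *\<^sub>R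
             G2 \<alpha> (integral {0..1} (\<lambda>t. dot \<gamma> (x + t * w)), dot \<gamma> x,
                ddot \<gamma> (x + s2 * w + (s1 - s2) * \<phi>1 * w), ddot \<gamma> (x + s2 * w + (s1 - s2) * \<phi>2 * w),
                ddot \<gamma> x))))))"
    unfolding R2_def
    by (intro integral_cong R2_integrand_eq_quadruple_integral derivs unit
        periodic_injective_chord_nonzero[OF periodic inj]) (use \<epsilon> in auto)
  finally show ?thesis .
qed

theorem theorem6p1:
  fixes \<alpha> :: real
  assumes "2 < \<alpha>" and "\<alpha> < 3"
  shows "\<exists>G :: (real^'n) \<times> (real^'n) \<times> (real^'n) \<times> (real^'n) \<times> (real^'n) \<Rightarrow> real^'n.
    real_analytic_on G {(a, b, c, d, e). norm a \<noteq> 0 \<and> norm a \<noteq> 1} \<and>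
    (\<forall>(\<gamma> :: real \<Rightarrow> real^'n) \<epsilon> x.
       arclength_simple_closed_curve \<gamma> \<and> 0 < \<epsilon> \<and> \<epsilon> \<le> 1/2 \<longrightarrow>
       Pperp (dot \<gamma> x) (R2 \<alpha> \<epsilon> \<gamma> x) =
       integral {w. \<epsilon> \<le> \<bar>w\<bar> \<and> \<bar>w\<bar> \<le> 1/2} (\<lambda>w.
         (1 / \<bar>w\<bar> powr (\<alpha> - 2)) *\<^sub>R
         integral {0..1} (\<lambda>s2. integral {0..1} (\<lambda>s1.
           integral {0..1} (\<lambda>\<phi>2. integral {0..1} (\<lambda>\<phi>1.
             (s1 - s2)^2 *\<^sub>R
             G (integral {0..1} (\<lambda>t. dot \<gamma> (x + t * w)),
                dot \<gamma> x,
                ddot \<gamma> (x + s2 * w + (s1 - s2) * \<phi>1 * w),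
                ddot \<gamma> (x + s2 * w + (s1 - s2) * \<phi>2 * w),
                ddot \<gamma> x)))))))"
  using real_analytic_on_G2 Pperp_R2_eq_integral_G2 by blast

end
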